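(* Let $n,q$ be positive integers and $s_1,\dots,s_q\ge0$ integers with $\frac{q(q+1)}{2}+\sum_{k=1}^q k\,s_k=n$. Define $\overline{\alpha}_i=q-i+1+\sum_{k=i}^q s_k$ for $1\le i\le q$. Then: (1) $\overline{\alpha}=(\overline{\alpha}_1,\dots,\overline{\alpha}_q)\in\mathcal{P}(n)$; (2) $\overline{\alpha}_1>\overline{\alpha}_2>\cdots>\overline{\alpha}_q$; (3) $\delta(\overline{\alpha})=\big(1,2,\dots,q-1,q,q^{(s_q)},(q-1)^{(s_{q-1})},\dots,1^{(s_1)}\big)$; (4) $s_i=\overline{\alpha}_i-\overline{\alpha}_{i+1}-1$ for $1\le i\le q-1$, and $s_q=\overline{\alpha}_q-1$.
   Context: A partition of a positive integer $n$ is a finite non-increasing sequence $\alpha=(\alpha_1,\dots,\alpha_l)$ of positive integers with sum $n$; $\mathcal{P}(n)$ is the set of partitions of $n$, and $\alpha_i=0$ for $i>l$. The diagonal sequence is $\delta(\alpha)=(d_k)_{k\ge1}$ with $d_k=|\{i:1\le i\le k,\ \alpha_i+i-1\ge k\}|$, trailing zeros omitted. The notation $j^{(s)}$ denotes $s$ consecutive entries equal to $j$. *)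

theory Defs
  imports Main
begin

definition part :: "nat list \<Rightarrow> nat \<Rightarrow> nat" where
  "part \<alpha> i = (if 1 \<le> i \<and> i \<le> length \<alpha> then \<alpha> ! (i - 1) else 0)"

definition is_partition :: "nat \<Rightarrow> nat list \<Rightarrow> bool" where
  "is_partition n \<alpha> \<longleftrightarrow>
     (\<forall>x\<in>set \<alpha>. 0 < x) \<and> sorted_wrt (\<ge>) \<alpha> \<and> sum_list \<alpha> = n"

definition partitions :: "nat \<Rightarrow> nat list set" where
  "partitions n = {\<alpha>. is_partition n \<alpha>}"

definition diag_entry :: "nat list \<Rightarrow> nat \<Rightarrow> nat" where
  "diag_entry \<alpha> k = card {i. 1 \<le> i \<and> i \<le> k \<and> part \<alpha> i + i - 1 \<ge> k}"

text \<open>The diagonal sequence with trailing zeros omitted. For a partition of n,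
  d_k = 0 for all k > n, so listing d_1..d_n and dropping trailing zeros is the
  whole (finite part of the) sequence.\<close>
definition diag_seq :: "nat list \<Rightarrow> nat list" where
  "diag_seq \<alpha> = rev (dropWhile (\<lambda>x. x = 0)
      (rev (map (diag_entry \<alpha>) [1..<Suc (sum_list \<alpha>)])))"

end

(* Removing the staircase (q, q - 1, ..., 1) from \<alpha> leaves the tail sums
   S_i = s_i + ... + s_q, so \<alpha>_i + i - 1 = q + S_i. Hence d_k = k for k \<le> q, while
   d_(q+m) counts the i with S_i \<ge> m: the conjugate of S_1 \<ge> ... \<ge> S_q, in which the
   value j occurs S_j - S_(j+1) = s_j times. The other claims are direct computations
   with the tail sums, using S_1 + ... + S_q = 1 s_1 + ... + q s_q. *)

theory Submission
  imports Defs
begin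

lemma map_upt_shift: "map f [a + i..<a + j] = map (\<lambda>m. f (a + m)) [i..<j]"
  by (rule nth_equalityI) (auto simp: add.assoc)

lemma upt_append_upt: "i \<le> j \<Longrightarrow> j \<le> k \<Longrightarrow> [i..<j] @ [j..<k] = [i..<k]"
  using upt_add_eq_append[of i j "k - j"] by simp

lemma rev_dropWhile_zero_append_zeros:
  "0 \<notin> set xs \<Longrightarrow> \<forall>y\<in>set ys. y = 0 \<Longrightarrow> rev (dropWhile (\<lambda>x. x = 0) (rev (xs @ ys))) = xs"
  by (cases xs rule: rev_cases) (auto simp: dropWhile_append)

lemma sum_tail_sums:
  fixes f :: "nat \<Rightarrow> 'a::comm_semiring_1"
  shows "(\<Sum>i=1..q. \<Sum>k=i..q. f k) = (\<Sum>k=1..q. of_nat k * f k)"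
proof (induction q)
  case (Suc q)
  have "(\<Sum>i=1..Suc q. \<Sum>k=i..Suc q. f k) = (\<Sum>i=1..q. (\<Sum>k=i..q. f k) + f (Suc q)) + f (Suc q)"
    by (auto simp: sum.cl_ivl_Suc intro!: sum.cong)
  then show ?case
    using Suc.IH by (simp add: sum.distrib algebra_simps)
qed simp

lemma gauss_sum_reversed: "(\<Sum>i=1..q. q - i + 1) = q * (q + 1) div (2::nat)"
proof -
  have "(\<Sum>i=1..q. q - i + 1) = (\<Sum>i=1..q. q + 1 - i)"
    by (intro sum.cong) auto
  also have "\<dots> = (\<Sum>i=1..q. i)"
    by (rule sum.atLeastAtMost_rev[symmetric])
  finally show ?thesis
    by (simp add: Sum_Icc_nat)
qed

definition stair_partition :: "nat \<Rightarrow> (nat \<Rightarrow> nat) \<Rightarrow> nat list" where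
  "stair_partition q s = map (\<lambda>i. q - i + 1 + (\<Sum>k=i..q. s k)) [1..<Suc q]"

lemma part_stair_partition:
  "part (stair_partition q s) i = (if 1 \<le> i \<and> i \<le> q then q - i + 1 + (\<Sum>k=i..q. s k) else 0)"
  by (auto simp: part_def stair_partition_def nth_map_upt simp del: upt_Suc)

lemma sum_list_stair_partition:
  "sum_list (stair_partition q s) = q * (q + 1) div 2 + (\<Sum>k=1..q. k * s k)"
proof -
  have "sum_list (stair_partition q s) = (\<Sum>i=1..q. q - i + 1 + (\<Sum>k=i..q. s k))"
    by (simp add: stair_partition_def sum_set_upt_conv_sum_list_nat[symmetric]
        atLeastLessThanSuc_atLeastAtMost del: upt_Suc)
  also have "\<dots> = (\<Sum>i=1..q. q - i + 1) + (\<Sum>i=1..q. \<Sum>k=i..q. s k)"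
    by (rule sum.distrib)
  also have "\<dots> = q * (q + 1) div 2 + (\<Sum>k=1..q. k * s k)"
    by (simp only: gauss_sum_reversed sum_tail_sums of_nat_id)
  finally show ?thesis .
qed

lemma stair_partition_in_partitions:
  "stair_partition q s \<in> partitions (q * (q + 1) div 2 + (\<Sum>k=1..q. k * s k))"
proof -
  have "sorted_wrt (\<ge>) (stair_partition q s)"
    unfolding stair_partition_def sorted_wrt_map
    by (rule sorted_wrt_mono_rel[OF _ sorted_wrt_upt]) (intro add_mono diff_le_mono2 sum_mono2; auto)
  moreover have "\<forall>x\<in>set (stair_partition q s). 0 < x"
    by (simp add: stair_partition_def)
  ultimately show ?thesis
    by (simp add: partitions_def is_partition_def sum_list_stair_partition)
qed

lemma part_stair_partition_Suc:
  assumes "1 \<le> i" and "i < q"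
  shows "part (stair_partition q s) i = part (stair_partition q s) (Suc i) + s i + 1"
  using assms by (simp add: part_stair_partition sum.atLeast_Suc_atMost Suc_diff_Suc)

lemma part_stair_partition_last: "0 < q \<Longrightarrow> part (stair_partition q s) q = s q + 1"
  by (simp add: part_stair_partition)

lemma map_card_tail_sums_ge:
  "map (\<lambda>m. card {i\<in>{1..q}. m \<le> (\<Sum>k=i..q. s k)}) [1..<Suc (\<Sum>k=1..q. s k)]
     = concat (map (\<lambda>j. replicate (s j) j) (rev [1..<Suc q]))"
proof (induction q)
  case (Suc q)
  \<comment> \<open>adding s (Suc q) to every tail sum prepends s (Suc q) copies of Suc q\<close>
  define a where "a = s (Suc q)"
  define b where "b = (\<Sum>k=1..q. s k)"
  have "[1..<Suc (\<Sum>k=1..Suc q. s k)] = [1..<Suc a] @ [a + 1..<a + Suc b]"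
    by (simp add: a_def b_def add.commute upt_append_upt del: upt_Suc)
  moreover have "map (\<lambda>m. card {i\<in>{1..Suc q}. m \<le> (\<Sum>k=i..Suc q. s k)}) [1..<Suc a]
      = replicate a (Suc q)"
  proof -
    have full: "{i\<in>{1..Suc q}. m \<le> (\<Sum>k=i..Suc q. s k)} = {1..Suc q}" if "m \<le> a" for m
      using that by (auto simp: a_def)
    have "map (\<lambda>m. card {i\<in>{1..Suc q}. m \<le> (\<Sum>k=i..Suc q. s k)}) [1..<Suc a]
        = map (\<lambda>_. Suc q) [1..<Suc a]"
      by (intro map_cong refl) (subst full; auto)
    then show ?thesis
      by (simp add: map_replicate_const)
  qed
  moreover have "map (\<lambda>m. card {i\<in>{1..Suc q}. m \<le> (\<Sum>k=i..Suc q. s k)}) [a + 1..<a + Suc b]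
      = map (\<lambda>m. card {i\<in>{1..q}. m \<le> (\<Sum>k=i..q. s k)}) [1..<Suc b]"
  proof -
    have shifted: "{i\<in>{1..Suc q}. a + m \<le> (\<Sum>k=i..Suc q. s k)} = {i\<in>{1..q}. m \<le> (\<Sum>k=i..q. s k)}"
      if "1 \<le> m" for m
      using that by (auto simp: a_def le_Suc_eq)
    show ?thesis
      unfolding map_upt_shift by (intro map_cong refl) (subst shifted; auto)
  qed
  ultimately show ?case
    using Suc.IH by (simp add: a_def b_def)
qed simp

lemma diag_entry_stair_partition:
  assumes "1 \<le> k"
  shows "diag_entry (stair_partition q s) k
    = (if k \<le> q then k else card {i\<in>{1..q}. k - q \<le> (\<Sum>j=i..q. s j)})"
proof -
  have "{i. 1 \<le> i \<and> i \<le> k \<and> part (stair_partition q s) i + i - 1 \<ge> k}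
      = (if k \<le> q then {1..k} else {i\<in>{1..q}. k - q \<le> (\<Sum>j=i..q. s j)})"
    using assms by (auto simp: part_stair_partition)
  then show ?thesis
    by (simp add: diag_entry_def)
qed

lemma diag_seq_stair_partition:
  "diag_seq (stair_partition q s) = [1..<Suc q] @ concat (map (\<lambda>j. replicate (s j) j) (rev [1..<Suc q]))"
proof -
  let ?\<alpha> = "stair_partition q s"
  define N where "N = (\<Sum>k=1..q. s k)"
  define n where "n = sum_list ?\<alpha>"
  have "q + N \<le> n"
  proof (cases q)
    case (Suc p)
    then have "q + N \<in> set ?\<alpha>"
      by (force simp: stair_partition_def N_def)
    then show ?thesis
      unfolding n_def by (simp add: member_le_sum_list)
  qed (simp add: N_def)
  then have split: "[1..<Suc n] = [1..<Suc q] @ [q + 1..<q + Suc N] @ [Suc (q + N)..<Suc n]"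
    by (simp add: upt_append_upt del: upt_Suc)
  have head: "map (diag_entry ?\<alpha>) [1..<Suc q] = [1..<Suc q]"
    by (rule map_idI) (simp add: diag_entry_stair_partition del: upt_Suc)
  have middle: "map (diag_entry ?\<alpha>) [q + 1..<q + Suc N]
      = concat (map (\<lambda>j. replicate (s j) j) (rev [1..<Suc q]))"
    unfolding map_upt_shift N_def map_card_tail_sums_ge[symmetric]
    by (intro map_cong refl) (simp add: diag_entry_stair_partition del: upt_Suc)
  have tail: "\<forall>d\<in>set (map (diag_entry ?\<alpha>) [Suc (q + N)..<Suc n]). d = 0"
  proof -
    have "(\<Sum>j=i..q. s j) \<le> N" if "1 \<le> i" for i
      unfolding N_def using that by (intro sum_mono2) auto
    then show ?thesis
      by (force simp: diag_entry_stair_partition)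
  qed
  have "map (diag_entry ?\<alpha>) [1..<Suc n]
      = ([1..<Suc q] @ concat (map (\<lambda>j. replicate (s j) j) (rev [1..<Suc q])))
        @ map (diag_entry ?\<alpha>) [Suc (q + N)..<Suc n]"
    by (simp only: split map_append head middle append_assoc)
  then show ?thesis
    unfolding diag_seq_def n_def[symmetric]
    by (simp only:) (rule rev_dropWhile_zero_append_zeros[OF _ tail], auto)
qed

theorem proposition2p3:
  fixes n q :: nat and s :: "nat \<Rightarrow> nat" and \<alpha> :: "nat list"
  assumes "0 < n" and "0 < q"
    and "q * (q + 1) div 2 + (\<Sum>k=1..q. k * s k) = n"
    and "\<alpha> = map (\<lambda>i. q - i + 1 + (\<Sum>k=i..q. s k)) [1..<Suc q]"
  shows "\<alpha> \<in> partitions n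
    \<and> (\<forall>i. 1 \<le> i \<and> i < q \<longrightarrow> part \<alpha> i > part \<alpha> (i + 1))
    \<and> diag_seq \<alpha> = [1..<Suc q] @ concat (map (\<lambda>j. replicate (s j) j) (rev [1..<Suc q]))
    \<and> (\<forall>i. 1 \<le> i \<and> i \<le> q - 1 \<longrightarrow>
           int (s i) = int (part \<alpha> i) - int (part \<alpha> (i + 1)) - 1)
    \<and> int (s q) = int (part \<alpha> q) - 1"
proof -
  have "\<alpha> = stair_partition q s"
    using assms(4) by (simp only: stair_partition_def)
  then show ?thesis
    using assms(2,3) stair_partition_in_partitions[of q s] diag_seq_stair_partition[of q s]
      part_stair_partition_Suc[of _ q s] part_stair_partition_last[of q s]
    by auto
qed

end
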